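(* For every integer $a\ge 4$, setting $N=\phi(a!)$, we have $\phi(a!)\,\phi((N-1)!)=\phi(N!)$. Consequently $c(a,N-1)\le N$ and $r(a,\phi(a!)-1)<1$ for all $a\ge 4$.
   Context: $\phi$ denotes Euler's totient function. For positive integers $a,b$, $c(a,b)$ is the least positive integer $c$ such that $\phi(a!)\,\phi(b!)$ divides $\phi(c!)$, and $r(a,b)=c(a,b)/(a+b)$. *)

theory Defs
  imports "HOL-Number_Theory.Number_Theory"
begin

definition cfun :: "nat \<Rightarrow> nat \<Rightarrow> nat" where
  "cfun a b = (LEAST c. 0 < c \<and> totient (fact a) * totient (fact b) dvd totient (fact c))"

definition rfun :: "nat \<Rightarrow> nat \<Rightarrow> real" where
  "rfun a b = real (cfun a b) / real (a + b)"

end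

theory Submission
  imports Defs
begin

text \<open>For a \<ge> 4 the number N = \<phi>(a!) is even and at least 8, hence not prime. Every prime
  divisor of a composite N is below N and so divides (N-1)!; multiplying (N-1)! by N therefore
  adds no new prime factors, and the product formula for \<phi> gives \<phi>(N!) = N \<phi>((N-1)!) =
  \<phi>(a!) \<phi>((N-1)!). Thus c = N is admissible for c(a, N-1), and N < a + N - 1.\<close>

lemma totient_mult_eq_if_prime_factors_subset:
  fixes n m :: nat
  assumes "n > 0" "m > 0" "\<And>p. prime p \<Longrightarrow> p dvd n \<Longrightarrow> p dvd m"
  shows "totient (n * m) = n * totient m"
proof -
  have factors: "prime_factors (n * m) = prime_factors m"
    using assms by (auto simp: prime_factors_product in_prime_factors_iff)
  have "real (totient (n * m)) = real (n * m) * (\<Prod>p\<in>prime_factors (n * m). 1 - 1 / real p)"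
    by (rule totient_formula2)
  also have "\<dots> = real n * (real m * (\<Prod>p\<in>prime_factors m. 1 - 1 / real p))"
    by (simp add: factors)
  also have "\<dots> = real n * real (totient m)"
    by (simp add: totient_formula2)
  finally show ?thesis
    by (metis of_nat_eq_iff of_nat_mult)
qed

lemma totient_fact_eq_mult_totient_fact_pred:
  fixes n :: nat
  assumes "n > 0" "\<not> prime n"
  shows "totient (fact n :: nat) = n * totient (fact (n - 1) :: nat)"
proof -
  have "(fact n :: nat) = n * fact (n - 1)"
    using assms(1) fact_reduce[of n, where ?'a = nat] by simp
  moreover have "totient (n * fact (n - 1)) = n * totient (fact (n - 1) :: nat)"
  proof (rule totient_mult_eq_if_prime_factors_subset)
    fix p :: nat
    assume p: "prime p" "p dvd n"
    then have "p < n"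
      using assms by (metis dvd_imp_le le_neq_implies_less)
    then show "p dvd fact (n - 1)"
      using prime_ge_1_nat[OF p(1)] by (intro dvd_fact) auto
  qed (use assms in auto)
  ultimately show ?thesis
    by simp
qed

lemma totient_fact_ge_8:
  fixes a :: nat
  assumes "a \<ge> 4"
  shows "totient (fact a :: nat) \<ge> 8"
proof -
  have "(24 :: nat) dvd fact a"
    using fact_dvd[OF assms, where ?'a = nat] by (simp add: fact_numeral)
  then have "totient (24 :: nat) \<le> totient (fact a :: nat)"
    by (intro totient_dvd_mono) auto
  moreover have "totient (24 :: nat) = 8"
  proof -
    have "totient (24 :: nat) = totient (2 ^ 3 * 3)"
      by simp
    also have "\<dots> = totient (2 ^ 3) * totient (3 :: nat)"
      by (rule totient_mult_coprime) (simp add: coprime_iff_gcd_eq_1 gcd_non_0_nat)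
    also have "\<dots> = 8"
      by (simp add: totient_prime_power totient_prime)
    finally show ?thesis .
  qed
  ultimately show ?thesis
    by simp
qed

lemma even_totient_fact:
  fixes a :: nat
  assumes "a \<ge> 3"
  shows "even (totient (fact a :: nat))"
proof (rule totient_even)
  have "(6 :: nat) dvd fact a"
    using fact_dvd[OF assms, where ?'a = nat] by (simp add: fact_numeral)
  then show "fact a > (2 :: nat)"
    using dvd_imp_le[of 6 "fact a :: nat"] by simp
qed

lemma cfun_le:
  assumes "c > 0" "totient (fact a) * totient (fact b) dvd totient (fact c)"
  shows "cfun a b \<le> c"
  unfolding cfun_def by (rule Least_le) (use assms in simp)

theorem mainTheorem9:
  fixes a :: nat
  assumes "a \<ge> 4"
  defines "N \<equiv> totient (fact a :: nat)"
  shows "totient (fact a :: nat) * totient (fact (N - 1) :: nat) = totient (fact N :: nat)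
         \<and> cfun a (N - 1) \<le> N
         \<and> rfun a (totient (fact a) - 1) < 1"
proof -
  have N_ge: "N \<ge> 8"
    unfolding N_def using totient_fact_ge_8[OF assms(1)] .
  have "even N"
    unfolding N_def using even_totient_fact assms(1) by simp
  with N_ge have "\<not> prime N"
    using prime_odd_nat[of N] by auto
  with N_ge have eq: "N * totient (fact (N - 1) :: nat) = totient (fact N :: nat)"
    using totient_fact_eq_mult_totient_fact_pred[of N] by simp
  have c: "cfun a (N - 1) \<le> N"
    using N_ge eq by (intro cfun_le) (simp_all add: N_def)
  then have "rfun a (N - 1) < 1"
    using assms(1) N_ge unfolding rfun_def by simp
  with eq c show ?thesis
    by (simp only: N_def)
qed

end
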